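(* Let $\mathcal{E}=(\mathcal{O},\mathcal{A},\mathcal{T})$ be an environment, $\delta\in\mathbb{N}$, and let $\mathcal{S}h$ be a shield such that $\Pi_{\mathcal{S}h}\subseteq\Pi^{\text{clock}}_\delta$. Then $\mathcal{S}h$ is agnostic to the last $\delta$ observations: for all $\tau\in(\mathcal{O}\times\mathcal{A})^*$, all $(a_1,\dots,a_{\delta-1})\in\mathcal{A}^{\delta-1}$ and all $(o_1,\dots,o_\delta),(o'_1,\dots,o'_\delta)\in\mathcal{O}^\delta$: (1) if $\mathcal{S}h$ is a pre-shield, then $\mathcal{S}h(\tau\cdot(o_1,a_1)\cdots(o_{\delta-1},a_{\delta-1}),o_\delta)=\mathcal{S}h(\tau\cdot(o'_1,a_1)\cdots(o'_{\delta-1},a_{\delta-1}),o'_\delta)$; (2) if $\mathcal{S}h$ is a post-shield, then for every $a_\delta\in\mathcal{A}$, $\mathcal{S}h(\tau\cdot(o_1,a_1)\cdots(o_{\delta-1},a_{\delta-1}),o_\delta,a_\delta)=\mathcal{S}h(\tau\cdot(o'_1,a_1)\cdots(o'_{\delta-1},a_{\delta-1}),o'_\delta,a_\delta)$.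
   Context: Observations $\mathcal{O}$, actions $\mathcal{A}$; an environment is $(\mathcal{O},\mathcal{A},\mathcal{T})$ with $\mathcal{T}:(\mathcal{O}\times\mathcal{A})^*\to\mathcal{D}(\mathcal{O})$; an agent is $\mathrm{Ag}:(\mathcal{O}\times\mathcal{A})^*\times\mathcal{O}\to\mathcal{D}(\mathcal{A})$. $\Pi^{\text{clock}}_\delta$ is the set of agents agnostic to the last $\delta$ observations: $\mathrm{Ag}(\tau\cdot(o_1,a_1)\cdots(o_{\delta-1},a_{\delta-1}),o_\delta)=\mathrm{Ag}(\tau\cdot(o'_1,a_1)\cdots(o'_{\delta-1},a_{\delta-1}),o'_\delta)$ for all $\tau$, all $a_1,\dots,a_{\delta-1}$ and all $o_i,o'_i$. A pre-shield is $\mathcal{S}h:(\mathcal{O}\times\mathcal{A})^*\times\mathcal{O}\to 2^{\mathcal{A}}$; a post-shield is $\mathcal{S}h:(\mathcal{O}\times\mathcal{A})^*\times\mathcal{O}\times\mathcal{A}\to\mathcal{A}$. The pre-shield induced by an agent $\mathrm{Ag}$ is $(\tau,o)\mapsto\mathrm{Supp}(\mathrm{Ag}(\tau,o))$. A determinization of $\mathrm{Ag}$ is a deterministic agent $\mathrm{Ag}_{det}$ with $\mathrm{Ag}_{det}(\tau,o)\in\mathrm{Supp}(\mathrm{Ag}(\tau,o))$; the post-shield induced by $(\mathrm{Ag},\mathrm{Ag}_{det})$ maps $(\tau,o,a)$ to $a$ if $a\in\mathrm{Supp}(\mathrm{Ag}(\tau,o))$ and to $\mathrm{Ag}_{det}(\tau,o)$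 otherwise. $\Pi_{\mathcal{S}h}$ (agents associated with $\mathcal{S}h$) is the set of agents whose induced pre-shield equals $\mathcal{S}h$ (for a pre-shield), resp. which have a determinization whose induced post-shield equals $\mathcal{S}h$ (for a post-shield).
   Formalization: In both parts, $\Pi_{\mathcal{S}h}$ is also assumed nonempty, so $\mathcal{S}h$ is induced by at least one agent (with a determinization, for a post-shield). The statement above fails without it. *)

theory Defs
  imports "HOL-Probability.Probability_Mass_Function"
begin

type_synonym ('o, 'a) agent = "('o \<times> 'a) list \<Rightarrow> 'o \<Rightarrow> 'a pmf"
type_synonym ('o, 'a) det_agent = "('o \<times> 'a) list \<Rightarrow> 'o \<Rightarrow> 'a"
type_synonym ('o, 'a) pre_shield = "('o \<times> 'a) list \<Rightarrow> 'o \<Rightarrow> 'a set"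
type_synonym ('o, 'a) post_shield = "('o \<times> 'a) list \<Rightarrow> 'o \<Rightarrow> 'a \<Rightarrow> 'a"

text \<open>Agents agnostic to the last delta observations: the history suffix
  (o_1,a_1)...(o_{delta-1},a_{delta-1}) is zip os as with length delta-1,
  and o_delta is the current observation.\<close>
definition clock_agents :: "nat \<Rightarrow> ('o, 'a) agent set" where
  "clock_agents \<delta> = {Ag. \<forall>\<tau> as os os' ob ob'.
      length as = \<delta> - 1 \<longrightarrow> length os = \<delta> - 1 \<longrightarrow> length os' = \<delta> - 1 \<longrightarrow>
      Ag (\<tau> @ zip os as) ob = Ag (\<tau> @ zip os' as) ob'}"

definition induced_pre_shield :: "('o, 'a) agent \<Rightarrow> ('o, 'a) pre_shield" where
  "induced_pre_shield Ag = (\<lambda>\<tau> ob. set_pmf (Ag \<tau> ob))"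

definition is_determinization :: "('o, 'a) agent \<Rightarrow> ('o, 'a) det_agent \<Rightarrow> bool" where
  "is_determinization Ag d \<longleftrightarrow> (\<forall>\<tau> ob. d \<tau> ob \<in> set_pmf (Ag \<tau> ob))"

definition induced_post_shield :: "('o, 'a) agent \<Rightarrow> ('o, 'a) det_agent \<Rightarrow> ('o, 'a) post_shield" where
  "induced_post_shield Ag d = (\<lambda>\<tau> ob a. if a \<in> set_pmf (Ag \<tau> ob) then a else d \<tau> ob)"

definition agents_pre :: "('o, 'a) pre_shield \<Rightarrow> ('o, 'a) agent set" where
  "agents_pre Sh = {Ag. induced_pre_shield Ag = Sh}"

definition agents_post :: "('o, 'a) post_shield \<Rightarrow> ('o, 'a) agent set" where
  "agents_post Sh = {Ag. \<exists>d. is_determinization Ag d \<and> induced_post_shield Ag d = Sh}"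

end

theory Submission
  imports Defs
begin

text \<open>For pre-shields the claim is immediate, since any single agent of \<open>\<Pi>\<^sub>S\<^sub>h\<close> induces
  \<open>Sh\<close>. A post-shield only constrains the supports of its agents, so \<open>\<Pi>\<^sub>S\<^sub>h\<close> is closed
  under any support-preserving change of the distribution at one input. If two distinct
  inputs had to receive equal distributions from all these agents, perturbing one of them
  shows that the support there is a singleton \<open>{b}\<close>; the determinization is then forced
  to pick \<open>b\<close>, so the post-shield maps every action to \<open>b\<close> at both inputs.\<close>

lemma pmf_exists_same_support_neq:
  fixes p :: "'a pmf"
  assumes x: "x \<in> set_pmf p" and not_single: "set_pmf p \<noteq> {x}"
  obtains q where "set_pmf q = set_pmf p" and "q \<noteq> p"
proof
  define q where "q = bind_pmf (bernoulli_pmf (1/2)) (\<lambda>b. if b then p else return_pmf x)"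
  show "set_pmf q = set_pmf p"
    using x unfolding q_def by (auto split: if_splits)
  obtain y where y: "y \<in> set_pmf p" "y \<noteq> x"
    using x not_single by blast
  show "q \<noteq> p"
  proof
    assume "q = p"
    moreover have "pmf q x = (pmf p x + 1) / 2"
      unfolding q_def by (simp add: pmf_bind indicator_def)
    ultimately have "pmf p x = 1" by simp
    have "pmf p x + pmf p y = measure p {x, y}"
      using y(2) by (simp add: measure_pmf.finite_measure_eq_sum_singleton measure_pmf_single)
    also have "\<dots> \<le> 1" by simp
    finally show False
      using \<open>pmf p x = 1\<close> y(1) by (simp add: set_pmf_iff)
  qed
qed

lemma agents_post_support_cong:
  assumes "Ag \<in> agents_post Sh"
    and "\<And>\<tau> ob. set_pmf (Ag' \<tau> ob) = set_pmf (Ag \<tau> ob)"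
  shows "Ag' \<in> agents_post Sh"
  using assms unfolding agents_post_def is_determinization_def induced_post_shield_def
  by simp

lemma agents_post_agree_imp_singleton_support:
  assumes Ag: "Ag \<in> agents_post Sh"
    and distinct: "(h, ob) \<noteq> (h', ob')"
    and agree: "\<forall>A \<in> agents_post Sh. A h ob = A h' ob'"
  shows "\<exists>b. set_pmf (Ag h ob) = {b}"
proof (rule ccontr)
  assume not_single: "\<nexists>b. set_pmf (Ag h ob) = {b}"
  obtain d where "is_determinization Ag d"
    using Ag unfolding agents_post_def by blast
  then have "d h ob \<in> set_pmf (Ag h ob)"
    unfolding is_determinization_def by blast
  with not_single obtain q where q: "set_pmf q = set_pmf (Ag h ob)" "q \<noteq> Ag h ob"
    using pmf_exists_same_support_neq by metis
  define Ag' where "Ag' = Ag(h := (Ag h)(ob := q))"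
  have "Ag' \<in> agents_post Sh"
    by (rule agents_post_support_cong[OF Ag]) (simp add: Ag'_def q(1))
  then have "Ag' h ob = Ag' h' ob'"
    using agree by blast
  moreover have "Ag' h' ob' = Ag h ob"
    using distinct agree Ag unfolding Ag'_def by (cases "h' = h") auto
  ultimately show False
    using q(2) by (simp add: Ag'_def)
qed

lemma agents_post_singleton_support_imp_shield:
  assumes "Ag \<in> agents_post Sh" and "set_pmf (Ag h ob) = {b}"
  shows "Sh h ob a = b"
proof -
  obtain d where d: "is_determinization Ag d" "induced_post_shield Ag d = Sh"
    using assms(1) unfolding agents_post_def by blast
  have "d h ob \<in> set_pmf (Ag h ob)"
    using d(1) unfolding is_determinization_def by blast
  then show ?thesis
    unfolding d(2)[symmetric] induced_post_shield_def using assms(2) by auto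
qed

lemma pre_shield_eq_if_agents_agree:
  assumes "agents_pre Sh \<noteq> {}"
    and "\<forall>A \<in> agents_pre Sh. A h ob = A h' ob'"
  shows "Sh h ob = Sh h' ob'"
  using assms unfolding agents_pre_def induced_pre_shield_def by auto

lemma post_shield_eq_if_agents_agree:
  assumes nonempty: "agents_post Sh \<noteq> {}"
    and agree: "\<forall>A \<in> agents_post Sh. A h ob = A h' ob'"
  shows "Sh h ob a = Sh h' ob' a"
proof (cases "(h, ob) = (h', ob')")
  case False
  obtain Ag where Ag: "Ag \<in> agents_post Sh"
    using nonempty by blast
  then obtain b where b: "set_pmf (Ag h ob) = {b}"
    using False agree by (blast dest: agents_post_agree_imp_singleton_support)
  moreover have "Ag h ob = Ag h' ob'"
    using agree Ag by (rule bspec)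
  ultimately have "set_pmf (Ag h' ob') = {b}"
    by simp
  with Ag b show ?thesis
    using agents_post_singleton_support_imp_shield by metis
qed simp

lemma clock_agents_agree:
  assumes "Ag \<in> clock_agents \<delta>"
    and "length as = \<delta> - 1" "length os = \<delta> - 1" "length os' = \<delta> - 1"
  shows "Ag (\<tau> @ zip os as) ob = Ag (\<tau> @ zip os' as) ob'"
  using assms unfolding clock_agents_def by blast

theorem lemma3p1:
  fixes \<delta> :: nat
  assumes "1 \<le> \<delta>"
  shows "(\<forall>Sh :: ('o, 'a) pre_shield.
            agents_pre Sh \<noteq> {} \<and> agents_pre Sh \<subseteq> clock_agents \<delta> \<longrightarrow>
            (\<forall>\<tau> as os os' ob ob'.
               length as = \<delta> - 1 \<longrightarrow> length os = \<delta> - 1 \<longrightarrow> length os' = \<delta> - 1 \<longrightarrow>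
               Sh (\<tau> @ zip os as) ob = Sh (\<tau> @ zip os' as) ob'))
       \<and> (\<forall>Sh :: ('o, 'a) post_shield.
            agents_post Sh \<noteq> {} \<and> agents_post Sh \<subseteq> clock_agents \<delta> \<longrightarrow>
            (\<forall>\<tau> as os os' ob ob' a.
               length as = \<delta> - 1 \<longrightarrow> length os = \<delta> - 1 \<longrightarrow> length os' = \<delta> - 1 \<longrightarrow>
               Sh (\<tau> @ zip os as) ob a = Sh (\<tau> @ zip os' as) ob' a))"
proof (intro conjI allI impI; elim conjE)
  fix Sh :: "('o, 'a) pre_shield" and \<tau> :: "('o \<times> 'a) list"
    and as :: "'a list" and os os' :: "'o list" and ob ob' :: 'o
  assume nonempty: "agents_pre Sh \<noteq> {}" and clock: "agents_pre Sh \<subseteq> clock_agents \<delta>"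
    and lengths: "length as = \<delta> - 1" "length os = \<delta> - 1" "length os' = \<delta> - 1"
  have "\<forall>A \<in> agents_pre Sh. A (\<tau> @ zip os as) ob = A (\<tau> @ zip os' as) ob'"
    using clock clock_agents_agree[OF _ lengths] by blast
  with nonempty show "Sh (\<tau> @ zip os as) ob = Sh (\<tau> @ zip os' as) ob'"
    by (rule pre_shield_eq_if_agents_agree)
next
  fix Sh :: "('o, 'a) post_shield" and \<tau> :: "('o \<times> 'a) list"
    and as :: "'a list" and os os' :: "'o list" and ob ob' :: 'o and a :: 'a
  assume nonempty: "agents_post Sh \<noteq> {}" and clock: "agents_post Sh \<subseteq> clock_agents \<delta>"
    and lengths: "length as = \<delta> - 1" "length os = \<delta> - 1" "length os' = \<delta> - 1"
  have "\<forall>A \<in> agents_post Sh. A (\<tau> @ zip os as) ob = A (\<tau> @ zip os' as) ob'"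
    using clock clock_agents_agree[OF _ lengths] by blast
  with nonempty show "Sh (\<tau> @ zip os as) ob a = Sh (\<tau> @ zip os' as) ob' a"
    by (rule post_shield_eq_if_agents_agree)
qed

end
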